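(* For every $n\ge1$, $Z(G_n)=Z(\widehat{G}_n)=t_n+1$.
   Context: Zero forcing: given a graph and a set $S$ of vertices initially colored black (all others white), repeatedly apply the rule: if a black vertex $v$ has exactly one white neighbor $u$, then $u$ becomes black. $S$ is a zero forcing set if eventually every vertex becomes black. $Z(G)$ is the minimum size of a zero forcing set of $G$. Subdivided $K_4$: the complete graph on 4 vertices $a,b,c,e$ with the edge $ab$ subdivided by a new vertex $s$ (5 vertices, edges $as, sb, ac, ae, bc, be, ce$); $s$ is its subdivision vertex. $B_d$ ($d\ge1$) is the complete binary tree with $2^d-1$ vertices and root $r$. $G_n$ ($n\ge1$): take $B_{2n-1}$ with root $r_n$, and for every leaf $\ell$ of $B_{2n-1}$ attach a new copy of the subdivided $K_4$ by identifying $\ell$ with its subdivision vertex. $\widehat{G}_n$ is obtained from $G_n$ by adding a new vertex $y_n$ adjacent only to $r_n$. $t_1=2$, $t_{n+1}=4t_n+2$ for $n\ge1$. *)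

theory Defs
  imports Main
begin

inductive_set forced :: "'a set \<Rightarrow> ('a \<Rightarrow> 'a \<Rightarrow> bool) \<Rightarrow> 'a set \<Rightarrow> 'a set"
  for V E S where
  init: "x \<in> S \<Longrightarrow> x \<in> forced V E S"
| force: "\<lbrakk> v \<in> forced V E S; v \<in> V; u \<in> V; E v u;
           \<forall>w\<in>V. E v w \<and> w \<noteq> u \<longrightarrow> w \<in> forced V E S \<rbrakk>
          \<Longrightarrow> u \<in> forced V E S"

definition zero_forcing_set :: "'a set \<Rightarrow> ('a \<Rightarrow> 'a \<Rightarrow> bool) \<Rightarrow> 'a set \<Rightarrow> bool" where
  "zero_forcing_set V E S \<longleftrightarrow> S \<subseteq> V \<and> V \<subseteq> forced V E S"

definition Z :: "'a set \<Rightarrow> ('a \<Rightarrow> 'a \<Rightarrow> bool) \<Rightarrow> nat" where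
  "Z V E = (LEAST k. \<exists>S. zero_forcing_set V E S \<and> card S = k)"

text \<open>Labels of the four original vertices a,b,c,e of the subdivided K4
(the subdivision vertex s is identified with the leaf).\<close>
datatype klab = KA | KB | KC | KE

text \<open>Vertices: tree vertices T w (w a binary word, root = []), K4 vertices K w c
attached at leaf w, and the extra vertex Y (= y_n).\<close>
datatype vtx = T "bool list" | K "bool list" klab | Y

text \<open>Depth parameter of the binary tree B_(2n-1): its vertices are words of length < 2n-1.\<close>
definition tree_vertices :: "nat \<Rightarrow> vtx set" where
  "tree_vertices d = {T w | w. length w < d}"

definition VG :: "nat \<Rightarrow> vtx set" where
  "VG n = tree_vertices (2*n - 1) \<union> {K w c | w c. length w = 2*n - 2}"

definition VGh :: "nat \<Rightarrow> vtx set" where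
  "VGh n = VG n \<union> {Y}"

text \<open>Directed version of the edges; the graph adjacency is its symmetrisation.
Subdivided K4 at leaf w: edges s-a, s-b (s = T w) and all pairs among a,b,c,e except a-b.\<close>
definition base_edge :: "nat \<Rightarrow> vtx \<Rightarrow> vtx \<Rightarrow> bool" where
  "base_edge n x y \<longleftrightarrow>
     (\<exists>w b. x = T w \<and> y = T (w @ [b]) \<and> length w + 1 < 2*n - 1) \<or>
     (\<exists>w. length w = 2*n - 2 \<and>
        ((x = T w \<and> y = K w KA) \<or> (x = T w \<and> y = K w KB) \<or>
         (\<exists>c1 c2. x = K w c1 \<and> y = K w c2 \<and> c1 \<noteq> c2 \<and> {c1, c2} \<noteq> {KA, KB})))"

definition EG :: "nat \<Rightarrow> vtx \<Rightarrow> vtx \<Rightarrow> bool" where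
  "EG n x y \<longleftrightarrow> base_edge n x y \<or> base_edge n y x"

definition EGh :: "nat \<Rightarrow> vtx \<Rightarrow> vtx \<Rightarrow> bool" where
  "EGh n x y \<longleftrightarrow> EG n x y \<or> (x = Y \<and> y = T []) \<or> (x = T [] \<and> y = Y)"

fun t :: "nat \<Rightarrow> nat" where
  "t 0 = 0"
| "t (Suc 0) = 2"
| "t (Suc (Suc n)) = 4 * t (Suc n) + 2"

end

theory Submission
  imports Defs
begin

text \<open>
A zero forcing set meets every fort, i.e. every nonempty vertex set \<open>F\<close> such that no vertex
outside \<open>F\<close> has exactly one neighbour in \<open>F\<close>. For the lower bound we build, by induction
on \<open>k\<close>, a fort avoiding \<open>S\<close> inside the subtree below a tree vertex \<open>p\<close> of height \<open>2k\<close>: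
one avoiding \<open>p\<close> (hence a fort of the whole graph) when \<open>S\<close> has fewer than \<open>t (k+1)\<close>
vertices there, and at least one through \<open>p\<close> when \<open>S\<close> has at most \<open>t (k+1)\<close>. If a grandchild
subtree is light, or both grandchild subtrees below one child carry at most \<open>t (k+1)\<close> vertices
(their forts through the grandchildren unite to a fort avoiding the child), we are done.
Otherwise \<open>S\<close> has at least \<open>4 t (k+1) + 2 = t (k+2)\<close> vertices below \<open>p\<close>, and at equality
\<open>p \<notin> S\<close> and every child has a light grandchild whose fort, together with \<open>p\<close>, yields a fort
through \<open>p\<close>. Once the pendant vertex \<open>y\<^sub>n\<close> is attached to the root, it completes a fort
through the root, so \<open>S\<close> must contain \<open>y\<^sub>n\<close> or one more vertex of \<open>G\<^sub>n\<close>.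

For the upper bound the root (or \<open>y\<^sub>n\<close>) and \<open>t n\<close> further vertices force everything from the
top down: at a leaf, \<open>a\<close> and \<open>c\<close> are black, \<open>a\<close> forces \<open>e\<close> and then \<open>c\<close> forces \<open>b\<close>; two levels
higher the right grandchildren are black as well, and once their subtrees are black they force
their parents, which in turn force the left grandchildren.
\<close>

section \<open>Forts\<close>

definition unique_nbr_in :: "('a \<Rightarrow> 'a \<Rightarrow> bool) \<Rightarrow> 'a set \<Rightarrow> 'a \<Rightarrow> bool" where
  "unique_nbr_in E F v \<longleftrightarrow> (\<exists>!x. x \<in> F \<and> E v x)"

definition fort :: "'a set \<Rightarrow> ('a \<Rightarrow> 'a \<Rightarrow> bool) \<Rightarrow> 'a set \<Rightarrow> bool" where
  "fort V E F \<longleftrightarrow> F \<subseteq> V \<and> F \<noteq> {} \<and> (\<forall>v \<in> V - F. \<not> unique_nbr_in E F v)"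

lemma not_unique_nbr_inI_none: "(\<And>x. x \<in> F \<Longrightarrow> E v x \<Longrightarrow> False) \<Longrightarrow> \<not> unique_nbr_in E F v"
  by (auto simp: unique_nbr_in_def)

lemma not_unique_nbr_inI_two:
  "x \<in> F \<Longrightarrow> y \<in> F \<Longrightarrow> x \<noteq> y \<Longrightarrow> E v x \<Longrightarrow> E v y \<Longrightarrow> \<not> unique_nbr_in E F v"
  by (auto simp: unique_nbr_in_def)

lemma unique_nbr_in_cong:
  "(\<And>x. x \<in> F \<and> E v x \<longleftrightarrow> x \<in> F' \<and> E' v x) \<Longrightarrow> unique_nbr_in E F v = unique_nbr_in E' F' v"
  unfolding unique_nbr_in_def by (simp only:)

lemma forced_disjoint_fort:
  assumes "fort V E F" "F \<inter> S = {}" "x \<in> forced V E S"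
  shows "x \<notin> F"
  using assms(3)
proof (induction rule: forced.induct)
  case (init x)
  then show ?case using assms(2) by blast
next
  case (force v u)
  show ?case
  proof
    assume "u \<in> F"
    have "unique_nbr_in E F v"
      unfolding unique_nbr_in_def
    proof (rule ex1I)
      show "u \<in> F \<and> E v u" using force.hyps \<open>u \<in> F\<close> by blast
      show "x = u" if "x \<in> F \<and> E v x" for x
        using that force.hyps force.IH assms(1) unfolding fort_def by blast
    qed
    moreover have "v \<in> V - F" using force by blast
    ultimately show False using assms(1) by (auto simp: fort_def)
  qed
qed

lemma fort_meets_zero_forcing_set:
  assumes "zero_forcing_set V E S" "fort V E F"
  shows "F \<inter> S \<noteq> {}"
proof
  assume "F \<inter> S = {}"
  obtain x where "x \<in> F" using assms(2) by (auto simp: fort_def)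
  moreover have "x \<in> forced V E S"
    using assms \<open>x \<in> F\<close> by (auto simp: fort_def zero_forcing_set_def)
  ultimately show False using forced_disjoint_fort[OF assms(2) \<open>F \<inter> S = {}\<close>] by blast
qed

lemma Z_eqI:
  assumes "zero_forcing_set V E S" "card S = m" "\<And>S. zero_forcing_set V E S \<Longrightarrow> m \<le> card S"
  shows "Z V E = m"
  unfolding Z_def
proof (rule Least_equality)
  show "\<exists>S. zero_forcing_set V E S \<and> card S = m" using assms by blast
qed (use assms in blast)

section \<open>The graphs\<close>

definition klab_adj :: "klab \<Rightarrow> klab \<Rightarrow> bool" where
  "klab_adj c d \<longleftrightarrow> c \<noteq> d \<and> {c, d} \<noteq> {KA, KB}"

lemma klab_adj_simps [simp]:
  "klab_adj c c = False"
  "klab_adj KA KB = False" "klab_adj KB KA = False"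
  "klab_adj KA KC" "klab_adj KA KE" "klab_adj KB KC" "klab_adj KB KE"
  "klab_adj KC KA" "klab_adj KE KA" "klab_adj KC KB" "klab_adj KE KB"
  "klab_adj KC KE" "klab_adj KE KC"
  by (auto simp: klab_adj_def doubleton_eq_iff)

lemma klab_adj_KA_iff: "klab_adj KA c \<longleftrightarrow> c = KC \<or> c = KE"
  by (cases c) auto

lemma klab_adj_KC_iff: "klab_adj KC c \<longleftrightarrow> c = KA \<or> c = KB \<or> c = KE"
  by (cases c) auto

lemma klab_UNIV: "(UNIV :: klab set) = {KA, KB, KC, KE}"
  using klab.exhaust by auto

lemma EG_sym: "EG n x y = EG n y x"
  by (auto simp: EG_def)

lemma EG_Y [simp]: "\<not> EG n Y y" "\<not> EG n y Y"
  by (auto simp: EG_def base_edge_def)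

lemma EG_K_iff:
  "EG n (K w c) y \<longleftrightarrow>
     length w = 2*n - 2 \<and> ((y = T w \<and> (c = KA \<or> c = KB)) \<or> (\<exists>d. y = K w d \<and> klab_adj c d))"
  by (cases y) (auto simp: EG_def base_edge_def klab_adj_def insert_commute)

lemma EG_T_iff:
  "EG n (T w) y \<longleftrightarrow>
     (\<exists>b. y = T (w @ [b]) \<and> length w + 1 < 2*n - 1) \<or>
     (w \<noteq> [] \<and> y = T (butlast w) \<and> length w < 2*n - 1) \<or>
     (length w = 2*n - 2 \<and> (y = K w KA \<or> y = K w KB))"
proof (cases y)
  case (T v)
  have "(\<exists>b. w = v @ [b] \<and> length v + 1 < 2*n - 1) \<longleftrightarrow> (w \<noteq> [] \<and> v = butlast w \<and> length w < 2*n - 1)"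
    by (metis append_butlast_last_id butlast_snoc length_append_singleton Suc_eq_plus1 snoc_eq_iff_butlast)
  moreover have "EG n (T w) (T v) \<longleftrightarrow>
      (\<exists>b. v = w @ [b] \<and> length w + 1 < 2*n - 1) \<or> (\<exists>b. w = v @ [b] \<and> length v + 1 < 2*n - 1)"
    by (auto simp: EG_def base_edge_def)
  ultimately show ?thesis using T by auto
qed (auto simp: EG_def base_edge_def)

lemma VG_simps [simp]:
  "T w \<in> VG n \<longleftrightarrow> length w < 2*n - 1"
  "K w c \<in> VG n \<longleftrightarrow> length w = 2*n - 2"
  "Y \<notin> VG n"
  by (auto simp: VG_def tree_vertices_def)

lemma finite_VG: "finite (VG n)"
proof -
  let ?W = "{w :: bool list. set w \<subseteq> UNIV \<and> length w \<le> 2*n}"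
  have "finite ?W" by (rule finite_lists_length_le) simp
  moreover have "finite (UNIV :: klab set)" unfolding klab_UNIV by simp
  moreover have "VG n \<subseteq> T ` ?W \<union> (\<lambda>(w, c). K w c) ` (?W \<times> UNIV)"
    by (auto simp: VG_def tree_vertices_def)
  ultimately show ?thesis by (meson finite_SigmaI finite_UnI finite_imageI finite_subset)
qed

lemma EGh_Y_iff: "EGh n Y w \<longleftrightarrow> w = T []"
  by (auto simp: EGh_def)

lemma EGh_eq_EG: "v \<noteq> Y \<Longrightarrow> x \<noteq> Y \<Longrightarrow> EGh n v x \<longleftrightarrow> EG n v x"
  by (auto simp: EGh_def)

lemma EGh_eq_EG_off_root: "v \<noteq> Y \<Longrightarrow> v \<noteq> T [] \<Longrightarrow> EGh n v x \<longleftrightarrow> EG n v x"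
  by (auto simp: EGh_def)

fun vword :: "vtx \<Rightarrow> bool list" where
  "vword (T w) = w" | "vword (K w c) = w" | "vword Y = []"

locale tree_graph =
  fixes N :: nat
  assumes N_pos: "1 \<le> N"
begin

abbreviation "V \<equiv> VG N"
abbreviation "E \<equiv> EG N"
abbreviation "D \<equiv> 2*N - 2"

definition subtree :: "bool list \<Rightarrow> vtx set" where
  "subtree p = {x \<in> V. \<exists>q. vword x = p @ q}"

lemma EG_in_V: assumes "E x y" shows "x \<in> V" "y \<in> V"
proof -
  have "x \<in> V \<and> y \<in> V"
    using assms N_pos by (cases x) (auto simp: EG_T_iff EG_K_iff)
  then show "x \<in> V" "y \<in> V" by auto
qed

lemma subtree_Nil: "subtree [] = V"
  by (auto simp: subtree_def)

lemma finite_subtree: "finite (subtree p)"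
  by (rule finite_subset[OF _ finite_VG]) (auto simp: subtree_def)

lemma T_in_subtree: "length p < 2*N - 1 \<Longrightarrow> T p \<in> subtree p"
  by (auto simp: subtree_def)

lemma T_notin_subtree_child: "T p \<notin> subtree (p @ [b])"
  by (auto simp: subtree_def)

lemma subtree_child_subset: "subtree (p @ [b]) \<subseteq> subtree p"
  by (auto simp: subtree_def)

lemma subtree_children_disjoint: "b \<noteq> b' \<Longrightarrow> subtree (p @ [b]) \<inter> subtree (p @ [b']) = {}"
  by (auto simp: subtree_def)

lemma subtree_split:
  assumes "length p < D"
  shows "subtree p = insert (T p) (subtree (p @ [False]) \<union> subtree (p @ [True]))"
proof (rule set_eqI)
  fix x
  show "x \<in> subtree p \<longleftrightarrow> x \<in> insert (T p) (subtree (p @ [False]) \<union> subtree (p @ [True]))"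
  proof
    assume "x \<in> subtree p"
    then obtain q where x: "x \<in> V" "vword x = p @ q" by (auto simp: subtree_def)
    show "x \<in> insert (T p) (subtree (p @ [False]) \<union> subtree (p @ [True]))"
    proof (cases q)
      case Nil
      then show ?thesis using x assms by (cases x) auto
    next
      case (Cons b q')
      then show ?thesis using x by (cases b) (auto simp: subtree_def)
    qed
  qed (use assms in \<open>auto simp: subtree_def\<close>)
qed

lemma subtree_cases:
  assumes "length p < D" "v \<in> subtree p"
  obtains "v = T p" | b where "v \<in> subtree (p @ [b])"
  using assms subtree_split by blast

lemma subtree_leaf:
  assumes "length p = D"
  shows "subtree p = {T p, K p KA, K p KB, K p KC, K p KE}"
proof (rule set_eqI)
  fix x
  show "x \<in> subtree p \<longleftrightarrow> x \<in> {T p, K p KA, K p KB, K p KC, K p KE}"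
  proof
    assume "x \<in> subtree p"
    then obtain q where x: "x \<in> V" "vword x = p @ q" by (auto simp: subtree_def)
    then show "x \<in> {T p, K p KA, K p KB, K p KC, K p KE}"
      using assms N_pos by (cases x; cases q) (auto intro: klab.exhaust)
  qed (use assms N_pos in \<open>auto simp: subtree_def\<close>)
qed

lemma E_child: "length p < D \<Longrightarrow> E (T p) (T (p @ [b]))"
  by (auto simp: EG_T_iff)

lemma nbr_in_subtree:
  assumes "v \<in> subtree p" "v \<noteq> T p" "E v x"
  shows "x \<in> subtree p"
proof -
  obtain q where v: "v \<in> V" "vword v = p @ q" using assms(1) by (auto simp: subtree_def)
  have "x \<in> V" using EG_in_V(2)[OF assms(3)] .
  show ?thesis
  proof (cases v)
    case (T w)
    then have q: "q \<noteq> []" "w = p @ q" using v assms(2) by auto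
    then have "butlast w = p @ butlast q" by (simp add: butlast_append)
    then show ?thesis using assms(3) T \<open>x \<in> V\<close> q by (auto simp: EG_T_iff subtree_def)
  qed (use assms(3) v \<open>x \<in> V\<close> in \<open>auto simp: EG_K_iff subtree_def\<close>)
qed

lemma nbr_outside_subtree:
  assumes "E (T p) x" "x \<notin> subtree p"
  shows "p \<noteq> [] \<and> x = T (butlast p)"
  using assms EG_in_V(2)[OF assms(1)] by (auto simp: EG_T_iff subtree_def)

lemma nbr_in_child_subtree:
  assumes "length p < D" "E (T p) x" "x \<in> subtree (p @ [b])"
  shows "x = T (p @ [b])"
proof -
  have "butlast p \<noteq> p @ b # q" for q
  proof
    assume "butlast p = p @ b # q"
    then have "length (butlast p) = length (p @ b # q)" by simp
    then show False by simp
  qed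
  then show ?thesis using assms by (auto simp: EG_T_iff subtree_def)
qed

lemma nbr_of_child_subtree:
  assumes "length p < D" "v \<in> subtree (p @ [b])" "E v x"
  shows "x \<in> subtree (p @ [b]) \<or> x = T p"
proof (cases "v = T (p @ [b])")
  case True
  then show ?thesis using nbr_outside_subtree[of "p @ [b]" x] assms by auto
qed (use nbr_in_subtree assms in blast)

end

section \<open>Forts inside subtrees\<close>

lemma count_heavy_grandchildren:
  fixes g :: "bool \<Rightarrow> bool \<Rightarrow> nat"
  assumes ge: "\<And>b j. \<tau> \<le> g b j" and gt: "\<And>b. \<exists>j. \<tau> < g b j"
    and sum: "i + (g False False + g False True) + (g True False + g True True) \<le> c"
  shows "4*\<tau> + 2 \<le> c" and "c \<le> 4*\<tau> + 2 \<Longrightarrow> i = 0 \<and> (\<forall>b. \<exists>j. g b j \<le> \<tau>)"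
proof -
  have child: "2*\<tau> + 1 \<le> g b False + g b True" for b
  proof -
    obtain j where "\<tau> < g b j" using gt by blast
    then show ?thesis using ge[of b "\<not> j"] by (cases j) auto
  qed
  then show "4*\<tau> + 2 \<le> c" using sum child[of False] child[of True] by linarith
  assume "c \<le> 4*\<tau> + 2"
  then have "i = 0" "g b False + g b True \<le> 2*\<tau> + 1" for b
    using sum child[of False] child[of True] by (cases b; simp; linarith)+
  moreover have "\<exists>j. g b j \<le> \<tau>" if "g b False + g b True \<le> 2*\<tau> + 1" for b
  proof (rule ccontr)
    assume "\<not> (\<exists>j. g b j \<le> \<tau>)"
    then have "\<tau> < g b False" "\<tau> < g b True" by (meson not_le)+
    then show False using that by linarith
  qed
  ultimately show "i = 0 \<and> (\<forall>b. \<exists>j. g b j \<le> \<tau>)" by blast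
qed

context tree_graph
begin

text \<open>A closed fort misses \<open>T p\<close>, the only vertex
  with neighbours outside the subtree, so it is a fort of the whole graph; a rooted fort contains
  \<open>T p\<close> and may fail only at its parent; an open fort may fail only at \<open>T p\<close>, which has a
  neighbour in it.\<close>

definition closed_fort :: "bool list \<Rightarrow> vtx set \<Rightarrow> vtx set \<Rightarrow> bool" where
  "closed_fort p S F \<longleftrightarrow> F \<subseteq> subtree p \<and> F \<noteq> {} \<and> F \<inter> S = {} \<and> T p \<notin> F \<and>
     (\<forall>v \<in> subtree p - F. \<not> unique_nbr_in E F v)"

definition rooted_fort :: "bool list \<Rightarrow> vtx set \<Rightarrow> vtx set \<Rightarrow> bool" where
  "rooted_fort p S F \<longleftrightarrow> F \<subseteq> subtree p \<and> F \<inter> S = {} \<and> T p \<in> F \<and>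
     (\<forall>v \<in> subtree p - F. \<not> unique_nbr_in E F v)"

definition open_fort :: "bool list \<Rightarrow> vtx set \<Rightarrow> vtx set \<Rightarrow> bool" where
  "open_fort p S F \<longleftrightarrow> F \<subseteq> subtree p \<and> F \<inter> S = {} \<and> T p \<notin> F \<and>
     (\<forall>v \<in> subtree p - F - {T p}. \<not> unique_nbr_in E F v) \<and> (\<exists>x \<in> F. E (T p) x)"

lemma nbr_of_sibling_subtree:
  assumes "length p < D" "v \<in> subtree (p @ [b'])" "b' \<noteq> b" "E v x"
  shows "x \<notin> subtree (p @ [b])"
  using nbr_of_child_subtree[OF assms(1,2,4)] subtree_children_disjoint[OF assms(3), of p]
    T_notin_subtree_child by blast

lemma not_unique_nbr_in_sibling_subtree:
  assumes "length p < D" "F \<subseteq> subtree (p @ [b])" "v \<in> subtree (p @ [b'])" "b' \<noteq> b"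
  shows "\<not> unique_nbr_in E F v"
  by (rule not_unique_nbr_inI_none) (use nbr_of_sibling_subtree[OF assms(1,3,4)] assms(2) in blast)

lemma closed_fort_lift:
  assumes "length p < D" "closed_fort (p @ [b]) S F"
  shows "closed_fort p S F"
proof -
  have F: "F \<subseteq> subtree (p @ [b])" "T (p @ [b]) \<notin> F"
    using assms(2) by (auto simp: closed_fort_def)
  have "\<not> unique_nbr_in E F v" if "v \<in> subtree p - F" for v
  proof (cases rule: subtree_cases[OF assms(1) DiffD1[OF that]])
    case 1
    show ?thesis
      by (rule not_unique_nbr_inI_none) (use nbr_in_child_subtree[OF assms(1)] F 1 in blast)
  next
    case (2 b')
    then show ?thesis
      using that assms(2) not_unique_nbr_in_sibling_subtree[OF assms(1) F(1)]
      by (cases "b' = b") (auto simp: closed_fort_def)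
  qed
  then show ?thesis
    using assms(2) subtree_child_subset T_notin_subtree_child by (fastforce simp: closed_fort_def)
qed

lemma open_fort_of_rooted_child:
  assumes "length p < D" "rooted_fort (p @ [b]) S F"
  shows "open_fort p S F"
proof -
  have F: "F \<subseteq> subtree (p @ [b])" "T (p @ [b]) \<in> F"
    using assms(2) by (auto simp: rooted_fort_def)
  have "\<not> unique_nbr_in E F v" if "v \<in> subtree p - F - {T p}" for v
  proof -
    have "v \<in> subtree p" "v \<noteq> T p" using that by auto
    then obtain b' where "v \<in> subtree (p @ [b'])" using subtree_cases[OF assms(1)] by metis
    then show ?thesis
      using that assms(2) not_unique_nbr_in_sibling_subtree[OF assms(1) F(1)]
      by (cases "b' = b") (auto simp: rooted_fort_def)
  qed
  then show ?thesis
    using assms(2) F(2) E_child[OF assms(1)] subtree_child_subset T_notin_subtree_child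
    by (fastforce simp: rooted_fort_def open_fort_def)
qed

lemma unique_nbr_in_subtree_cong:
  assumes "v \<in> subtree q" "v \<noteq> T q" "G \<inter> subtree q = F \<inter> subtree q"
  shows "unique_nbr_in E G v = unique_nbr_in E F v"
proof (rule unique_nbr_in_cong)
  fix x
  show "x \<in> G \<and> E v x \<longleftrightarrow> x \<in> F \<and> E v x"
  proof (cases "E v x")
    case True
    then have "x \<in> subtree q" using nbr_in_subtree[OF assms(1,2)] by blast
    then show ?thesis using assms(3) True by blast
  qed simp
qed

lemma children_forts_Int_subtree:
  assumes "\<And>b. Fc b \<subseteq> subtree (p @ [b])"
  shows "(Fc False \<union> Fc True) \<inter> subtree (p @ [b]) = Fc b"
proof -
  have "Fc (\<not> b) \<inter> subtree (p @ [b]) = {}"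
    using assms[of "\<not> b"] subtree_children_disjoint[of "\<not> b" b p] by auto
  then show ?thesis using assms[of b] by (cases b) auto
qed

lemma closed_fort_join:
  assumes "length p < D" "\<And>b. rooted_fort (p @ [b]) S (Fc b)"
  shows "closed_fort p S (Fc False \<union> Fc True)"
proof -
  have F: "Fc b \<subseteq> subtree (p @ [b])" "T (p @ [b]) \<in> Fc b" for b
    using assms(2) by (auto simp: rooted_fort_def)
  have "\<not> unique_nbr_in E (Fc False \<union> Fc True) v" if "v \<in> subtree p - (Fc False \<union> Fc True)" for v
  proof (cases rule: subtree_cases[OF assms(1) DiffD1[OF that]])
    case 1
    show ?thesis
      by (rule not_unique_nbr_inI_two[of "T (p @ [False])" _ "T (p @ [True])"])
         (use F(2) E_child[OF assms(1)] in \<open>auto simp: 1\<close>)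
  next
    case (2 b)
    have "v \<notin> Fc b" using that by (cases b) auto
    then have "v \<noteq> T (p @ [b])" using F(2) by blast
    moreover have "(Fc False \<union> Fc True) \<inter> subtree (p @ [b]) = Fc b \<inter> subtree (p @ [b])"
      using children_forts_Int_subtree[of Fc p b, OF F(1)] F(1)[of b] by auto
    ultimately have "unique_nbr_in E (Fc False \<union> Fc True) v = unique_nbr_in E (Fc b) v"
      by (rule unique_nbr_in_subtree_cong[OF 2])
    moreover have "\<not> unique_nbr_in E (Fc b) v"
      using assms(2)[of b] 2 \<open>v \<notin> Fc b\<close> unfolding rooted_fort_def by blast
    ultimately show ?thesis by simp
  qed
  moreover have "Fc False \<union> Fc True \<subseteq> subtree p" "T p \<notin> Fc False \<union> Fc True"
    using F(1) subtree_child_subset T_notin_subtree_child by blast+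
  moreover have "(Fc False \<union> Fc True) \<inter> S = {}"
    using assms(2)[of False] assms(2)[of True] by (auto simp: rooted_fort_def)
  moreover have "Fc False \<union> Fc True \<noteq> {}" using F(2)[of True] by blast
  ultimately show ?thesis unfolding closed_fort_def by blast
qed

lemma rooted_fort_join:
  assumes "length p < D" "\<And>b. open_fort (p @ [b]) S (Fc b)" "T p \<notin> S"
  shows "rooted_fort p S (insert (T p) (Fc False \<union> Fc True))"
proof -
  let ?G = "insert (T p) (Fc False \<union> Fc True)"
  have F: "Fc b \<subseteq> subtree (p @ [b])" "T (p @ [b]) \<notin> Fc b" for b
    using assms(2) by (auto simp: open_fort_def)
  have "\<not> unique_nbr_in E ?G v" if "v \<in> subtree p - ?G" for v
  proof (cases rule: subtree_cases[OF assms(1) DiffD1[OF that]])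
    case 1
    then show ?thesis using that by blast
  next
    case (2 b)
    have "v \<notin> Fc b" using that by (cases b) auto
    show ?thesis
    proof (cases "v = T (p @ [b])")
      case True
      obtain x where "x \<in> Fc b" "E v x"
        using assms(2)[of b] True by (auto simp: open_fort_def)
      moreover have "E v (T p)" "x \<noteq> T p"
        using True E_child[OF assms(1)] EG_sym F(1) T_notin_subtree_child \<open>x \<in> Fc b\<close> by blast+
      ultimately show ?thesis
        by (intro not_unique_nbr_inI_two[of x _ "T p"]) (cases b; auto)+
    next
      case False
      have "?G \<inter> subtree (p @ [b]) = Fc b \<inter> subtree (p @ [b])"
        using children_forts_Int_subtree[of Fc p b, OF F(1)] F(1)[of b] T_notin_subtree_child[of p b]
        by auto
      then have "unique_nbr_in E ?G v = unique_nbr_in E (Fc b) v"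
        by (rule unique_nbr_in_subtree_cong[OF 2 False])
      moreover have "\<not> unique_nbr_in E (Fc b) v"
        using assms(2)[of b] 2 \<open>v \<notin> Fc b\<close> False unfolding open_fort_def by blast
      ultimately show ?thesis by simp
    qed
  qed
  moreover have "?G \<subseteq> subtree p"
    using F(1) subtree_child_subset T_in_subtree[of p] assms(1) by fastforce
  moreover have "?G \<inter> S = {}"
    using assms(2)[of False] assms(2)[of True] assms(3) by (auto simp: open_fort_def)
  ultimately show ?thesis unfolding rooted_fort_def by blast
qed

lemma E_leaf_iff:
  assumes "length p = D"
  shows "E (K p c) (T p) \<longleftrightarrow> c = KA \<or> c = KB"
    and "E (T p) (K p c) \<longleftrightarrow> c = KA \<or> c = KB"
    and "E (K p c) (K p d) \<longleftrightarrow> klab_adj c d"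
  using assms by (auto simp: EG_K_iff EG_sym[of N "T p"])

lemma closed_fort_leaf_AB:
  assumes "length p = D" "S \<inter> {K p KA, K p KB} = {}"
  shows "closed_fort p S {K p KA, K p KB}"
proof -
  have "\<not> unique_nbr_in E {K p KA, K p KB} v" if "v \<in> {T p, K p KC, K p KE}" for v
    by (rule not_unique_nbr_inI_two[of "K p KA" _ "K p KB"])
       (use that in \<open>auto simp: E_leaf_iff[OF assms(1)]\<close>)
  then show ?thesis using assms by (auto simp: closed_fort_def subtree_leaf)
qed

lemma closed_fort_leaf_CE:
  assumes "length p = D" "S \<inter> {K p KC, K p KE} = {}"
  shows "closed_fort p S {K p KC, K p KE}"
proof -
  have "\<not> unique_nbr_in E {K p KC, K p KE} (T p)"
    by (rule not_unique_nbr_inI_none) (auto simp: E_leaf_iff[OF assms(1)])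
  moreover have "\<not> unique_nbr_in E {K p KC, K p KE} v" if "v \<in> {K p KA, K p KB}" for v
    by (rule not_unique_nbr_inI_two[of "K p KC" _ "K p KE"])
       (use that in \<open>auto simp: E_leaf_iff[OF assms(1)]\<close>)
  ultimately show ?thesis using assms by (auto simp: closed_fort_def subtree_leaf)
qed

lemma rooted_fort_leaf:
  assumes "length p = D" "x \<in> {KA, KB}" "z \<in> {KC, KE}" "S \<inter> subtree p \<subseteq> {K p x, K p z}"
  shows "rooted_fort p S (subtree p - {K p x, K p z})"
proof -
  obtain x' z' where x': "x' \<in> {KA, KB}" "x' \<noteq> x" and z': "z' \<in> {KC, KE}" "z' \<noteq> z"
    using assms(2,3) by (metis insertCI klab.distinct)
  have F: "subtree p - {K p x, K p z} = {T p, K p x', K p z'}"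
    using assms(2,3) x' z' unfolding subtree_leaf[OF assms(1)] by (auto intro: klab.exhaust)
  have "\<not> unique_nbr_in E {T p, K p x', K p z'} (K p x)"
    by (rule not_unique_nbr_inI_two[of "T p" _ "K p z'"])
       (use assms(2) z' in \<open>auto simp: E_leaf_iff[OF assms(1)]\<close>)
  moreover have "\<not> unique_nbr_in E {T p, K p x', K p z'} (K p z)"
    by (rule not_unique_nbr_inI_two[of "K p x'" _ "K p z'"])
       (use assms(3) x' z' in \<open>auto simp: E_leaf_iff[OF assms(1)]\<close>)
  moreover have "T p \<in> subtree p - {K p x, K p z}"
    using F by blast
  ultimately show ?thesis
    using assms(4) unfolding rooted_fort_def F[symmetric] by blast
qed

abbreviation has_closed_fort :: "bool list \<Rightarrow> vtx set \<Rightarrow> bool" where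
  "has_closed_fort p S \<equiv> \<exists>F. closed_fort p S F"

abbreviation has_fort :: "bool list \<Rightarrow> vtx set \<Rightarrow> bool" where
  "has_fort p S \<equiv> (\<exists>F. closed_fort p S F) \<or> (\<exists>F. rooted_fort p S F)"

lemma card_Int_subtree:
  assumes "length p < D"
  shows "card (S \<inter> subtree p) =
    (if T p \<in> S then 1 else 0) + card (S \<inter> subtree (p @ [False])) + card (S \<inter> subtree (p @ [True]))"
proof -
  let ?A = "S \<inter> subtree (p @ [False])" and ?B = "S \<inter> subtree (p @ [True])"
  have fin: "finite ?A" "finite ?B" using finite_subtree by auto
  have "card (?A \<union> ?B) = card ?A + card ?B"
    using fin subtree_children_disjoint[of False True p] by (intro card_Un_disjoint) auto
  moreover have "T p \<notin> ?A \<union> ?B" using T_notin_subtree_child by blast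
  moreover have "S \<inter> subtree p = (if T p \<in> S then insert (T p) (?A \<union> ?B) else ?A \<union> ?B)"
    using subtree_split[OF assms] by auto
  ultimately show ?thesis using fin by simp
qed

lemma fort_in_leaf:
  assumes "length p = D"
  shows "card (S \<inter> subtree p) < 2 \<longrightarrow> has_closed_fort p S"
    and "card (S \<inter> subtree p) \<le> 2 \<longrightarrow> has_fort p S"
proof -
  have "has_closed_fort p S \<or> (2 \<le> card (S \<inter> subtree p) \<and> (card (S \<inter> subtree p) \<le> 2 \<longrightarrow> has_fort p S))"
  proof (cases "S \<inter> {K p KA, K p KB} = {} \<or> S \<inter> {K p KC, K p KE} = {}")
    case True
    then show ?thesis using closed_fort_leaf_AB[OF assms] closed_fort_leaf_CE[OF assms] by blast
  next
    case False
    then obtain x z where xz: "x \<in> {KA, KB}" "z \<in> {KC, KE}" "K p x \<in> S" "K p z \<in> S"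
      by blast
    then have sub: "{K p x, K p z} \<subseteq> S \<inter> subtree p"
      using subtree_leaf[OF assms] by auto
    have two: "card {K p x, K p z} = 2" using xz by auto
    have "2 \<le> card (S \<inter> subtree p)"
      using card_mono[OF _ sub] finite_subtree two by (metis finite_Int)
    moreover have "has_fort p S" if "card (S \<inter> subtree p) \<le> 2"
    proof -
      have "S \<inter> subtree p = {K p x, K p z}"
        using card_subset_eq[OF _ sub] finite_subtree two that \<open>2 \<le> _\<close> by (metis finite_Int le_antisym)
      then show ?thesis using rooted_fort_leaf[OF assms xz(1,2)] by blast
    qed
    ultimately show ?thesis by blast
  qed
  then show "card (S \<inter> subtree p) < 2 \<longrightarrow> has_closed_fort p S"
    and "card (S \<inter> subtree p) \<le> 2 \<longrightarrow> has_fort p S" by auto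
qed

lemma closed_fort_of_children:
  assumes "length p < D" "\<And>b. has_fort (p @ [b]) S"
  shows "has_closed_fort p S"
proof (cases "\<exists>b. has_closed_fort (p @ [b]) S")
  case True
  then show ?thesis using closed_fort_lift[OF assms(1)] by blast
next
  case False
  then obtain Fc where "\<And>b. rooted_fort (p @ [b]) S (Fc b)"
    using assms(2) by metis
  then show ?thesis using closed_fort_join[OF assms(1)] by blast
qed

lemma fort_of_grandchildren:
  assumes "length p + 1 < D" "T p \<notin> S" "\<And>b. \<exists>j. has_fort (p @ [b, j]) S"
  shows "has_fort p S"
proof -
  have len: "length p < D" "length (p @ [b]) < D" for b using assms(1) by auto
  have "has_closed_fort p S \<or> (\<exists>F. open_fort (p @ [b]) S F)" for b
  proof -
    obtain j where "has_fort (p @ [b, j]) S" using assms(3) by blast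
    then have "has_fort ((p @ [b]) @ [j]) S" by simp
    then show ?thesis
      using closed_fort_lift[OF len(1)] closed_fort_lift[OF len(2)] open_fort_of_rooted_child[OF len(2)]
      by blast
  qed
  then consider "has_closed_fort p S" | Fc where "\<And>b. open_fort (p @ [b]) S (Fc b)"
    by metis
  then show ?thesis using rooted_fort_join[OF len(1) _ assms(2)] by cases blast+
qed

lemma fort_if_card_le:
  "length p + 2*k = D \<Longrightarrow>
    (card (S \<inter> subtree p) < t (Suc k) \<longrightarrow> has_closed_fort p S) \<and>
    (card (S \<inter> subtree p) \<le> t (Suc k) \<longrightarrow> has_fort p S)"
proof (induction k arbitrary: p)
  case 0
  then have "length p = D" by simp
  then show ?case using fort_in_leaf[of p S] by auto
next
  case (Suc k)
  define \<tau> where "\<tau> = t (Suc k)"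
  define g where "g b j = card (S \<inter> subtree (p @ [b, j]))" for b j
  have len: "length p < D" "length (p @ [b]) < D" "length (p @ [b, j]) + 2*k = D" for b j
    using Suc.prems by auto
  have IH: "g b j < \<tau> \<Longrightarrow> has_closed_fort (p @ [b, j]) S" "g b j \<le> \<tau> \<Longrightarrow> has_fort (p @ [b, j]) S" for b j
    using Suc.IH[OF len(3)] by (auto simp: g_def \<tau>_def)
  have lift2: "has_closed_fort (p @ [b, j]) S \<Longrightarrow> has_closed_fort p S" for b j
    using closed_fort_lift[OF len(1), of b S] closed_fort_lift[OF len(2), of b j S] by auto
  have count: "(if T p \<in> S then 1 else 0) + (g False False + g False True) + (g True False + g True True)
      \<le> card (S \<inter> subtree p)"
    using card_Int_subtree[OF len(1), of S] card_Int_subtree[OF len(2)[of False], of S]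
      card_Int_subtree[OF len(2)[of True], of S]
    by (simp add: g_def)
  have t_Suc: "t (Suc (Suc k)) = 4*\<tau> + 2" by (simp add: \<tau>_def)
  consider (light) b j where "g b j < \<tau>" | (balanced) b where "\<And>j. g b j \<le> \<tau>"
    | (heavy) "\<And>b j. \<tau> \<le> g b j" "\<And>b. \<exists>j. \<tau> < g b j"
    by (meson not_le)
  then show ?case
  proof cases
    case light
    then show ?thesis using IH(1) lift2 by blast
  next
    case balanced
    then have "has_closed_fort (p @ [b]) S" using IH(2) closed_fort_of_children[OF len(2)] by simp
    then show ?thesis using closed_fort_lift[OF len(1)] by blast
  next
    case heavy
    have "\<not> card (S \<inter> subtree p) < t (Suc (Suc k))"
      using count_heavy_grandchildren(1)[OF heavy count] t_Suc by simp
    moreover have "has_fort p S" if "card (S \<inter> subtree p) \<le> t (Suc (Suc k))"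
    proof (rule fort_of_grandchildren)
      have "T p \<notin> S \<and> (\<forall>b. \<exists>j. g b j \<le> \<tau>)"
        using count_heavy_grandchildren(2)[OF heavy count] that t_Suc by (simp split: if_splits)
      then show "T p \<notin> S" "\<exists>j. has_fort (p @ [b, j]) S" for b
        using IH(2) by blast+
    qed (use len(2)[of False] in simp)
    ultimately show ?thesis by blast
  qed
qed

end

section \<open>Forcing the subtrees\<close>

fun zf_seed :: "nat \<Rightarrow> bool list \<Rightarrow> vtx set" where
  "zf_seed 0 p = {K p KA, K p KC}"
| "zf_seed (Suc k) p =
     (\<Union>b. insert (T (p @ [b, True])) (zf_seed k (p @ [b, False]) \<union> zf_seed k (p @ [b, True])))"

context tree_graph
begin

lemma card_Un_children:
  "A \<subseteq> subtree (p @ [False]) \<Longrightarrow> B \<subseteq> subtree (p @ [True]) \<Longrightarrow> card (A \<union> B) = card A + card B"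
  using subtree_children_disjoint[of False True p] finite_subtree
  by (intro card_Un_disjoint) (auto intro: finite_subset)

lemma subtree_grandchild_subset: "subtree (p @ [b, j]) \<subseteq> subtree (p @ [b])"
  using subtree_child_subset[of "p @ [b]" j] by simp

lemma zf_seed_subset: "length p + 2*k = D \<Longrightarrow> zf_seed k p \<subseteq> subtree p - {T p}"
proof (induction k arbitrary: p)
  case 0
  then show ?case using subtree_leaf[of p] by auto
next
  case (Suc k)
  have "insert (T (p @ [b, True])) (zf_seed k (p @ [b, False]) \<union> zf_seed k (p @ [b, True]))
      \<subseteq> subtree (p @ [b])" for b
  proof -
    have "zf_seed k (p @ [b, j]) \<subseteq> subtree (p @ [b])" for j
      using Suc.IH[of "p @ [b, j]"] Suc.prems subtree_grandchild_subset by fastforce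
    moreover have "T (p @ [b, True]) \<in> subtree (p @ [b])"
      using T_in_subtree[of "p @ [b, True]"] Suc.prems subtree_grandchild_subset by fastforce
    ultimately show ?thesis by blast
  qed
  moreover have "subtree (p @ [b]) \<subseteq> subtree p - {T p}" for b
    using subtree_child_subset T_notin_subtree_child by blast
  ultimately show ?case by (simp only: zf_seed.simps) blast
qed

lemma card_zf_seed: "length p + 2*k = D \<Longrightarrow> card (zf_seed k p) = t (Suc k)"
proof (induction k arbitrary: p)
  case (Suc k)
  have len: "length (p @ [b, j]) + 2*k = D" "length (p @ [b, j]) < 2*N - 1" for b j
    using Suc.prems by auto
  have sub: "zf_seed k (p @ [b, j]) \<subseteq> subtree ((p @ [b]) @ [j]) - {T (p @ [b, j])}" for b j
    using zf_seed_subset[OF len(1)] by simp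
  define A where "A b = insert (T (p @ [b, True])) (zf_seed k (p @ [b, False]) \<union> zf_seed k (p @ [b, True]))" for b
  have card_A: "card (A b) = 2 * t (Suc k) + 1" for b
  proof -
    have "T (p @ [b, True]) \<notin> zf_seed k (p @ [b, False]) \<union> zf_seed k (p @ [b, True])"
      using sub[of b] subtree_children_disjoint[of False True "p @ [b]"] T_in_subtree[OF len(2)]
      by (simp, blast)
    moreover have "finite (zf_seed k (p @ [b, j]))" for j
      using sub[of b j] finite_subtree by (blast intro: finite_subset)
    moreover have "card (zf_seed k (p @ [b, False]) \<union> zf_seed k (p @ [b, True])) = 2 * t (Suc k)"
    proof -
      have "zf_seed k (p @ [b, j]) \<subseteq> subtree ((p @ [b]) @ [j])" for j
        using sub[of b j] by blast
      then show ?thesis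
        using card_Un_children[of _ "p @ [b]"] Suc.IH[OF len(1)] by simp
    qed
    ultimately show ?thesis by (simp add: A_def)
  qed
  have "A b \<subseteq> subtree (p @ [b])" for b
    using sub[of b] subtree_child_subset[of "p @ [b]"] T_in_subtree[OF len(2)] subtree_grandchild_subset
    unfolding A_def by blast
  then have "card (A False \<union> A True) = card (A False) + card (A True)"
    by (intro card_Un_children)
  moreover have "zf_seed (Suc k) p = A False \<union> A True"
    by (auto simp: A_def UNIV_bool)
  ultimately show ?case using card_A by simp
qed simp

end

text \<open>Both \<open>G\<^sub>n\<close> and the graph with \<open>y\<^sub>n\<close> attached to the root are supergraphs in this sense.\<close>

locale tree_supergraph = tree_graph +
  fixes V' :: "vtx set" and E' :: "vtx \<Rightarrow> vtx \<Rightarrow> bool"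
  assumes V_subset: "V \<subseteq> V'"
    and E'_off_root: "\<And>v w. v \<in> V \<Longrightarrow> v \<noteq> T [] \<Longrightarrow> E' v w \<longleftrightarrow> E v w"
begin

lemma force_off_root:
  assumes "v \<in> forced V' E' S" "v \<noteq> T []" "E v u"
    and "\<And>w. E v w \<Longrightarrow> w \<noteq> u \<Longrightarrow> w \<in> forced V' E' S"
  shows "u \<in> forced V' E' S"
proof (rule forced.force[OF assms(1)])
  have "v \<in> V" "u \<in> V" using EG_in_V[OF assms(3)] by auto
  then show "v \<in> V'" "u \<in> V'" using V_subset by auto
  show "E' v u" "\<forall>w\<in>V'. E' v w \<and> w \<noteq> u \<longrightarrow> w \<in> forced V' E' S"
    using E'_off_root[OF \<open>v \<in> V\<close> assms(2)] assms(3,4) by auto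
qed

lemma leaf_forced:
  assumes "length p = D" "zf_seed 0 p \<subseteq> S" "T p \<in> forced V' E' S"
  shows "subtree p \<subseteq> forced V' E' S"
proof -
  have A: "K p KA \<in> forced V' E' S" and C: "K p KC \<in> forced V' E' S"
    using assms(2) by (auto intro: forced.init)
  have KE: "K p KE \<in> forced V' E' S"
  proof (rule force_off_root[OF A])
    show "E (K p KA) (K p KE)" using assms(1) by (simp add: EG_K_iff)
    show "w \<in> forced V' E' S" if "E (K p KA) w" "w \<noteq> K p KE" for w
      using that C assms(3) by (auto simp: EG_K_iff klab_adj_KA_iff)
  qed simp
  have "K p KB \<in> forced V' E' S"
  proof (rule force_off_root[OF C])
    show "E (K p KC) (K p KB)" using assms(1) by (simp add: EG_K_iff)
    show "w \<in> forced V' E' S" if "E (K p KC) w" "w \<noteq> K p KB" for w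
      using that A KE by (auto simp: EG_K_iff klab_adj_KC_iff)
  qed simp
  then show ?thesis using A C KE assms(3) subtree_leaf[OF assms(1)] by auto
qed

lemma parent_forced:
  assumes "length p < D" "subtree (p @ [b]) \<subseteq> forced V' E' S"
  shows "T p \<in> forced V' E' S"
proof (rule force_off_root)
  show "T (p @ [b]) \<in> forced V' E' S"
    using assms T_in_subtree[of "p @ [b]"] by auto
  show "E (T (p @ [b])) (T p)"
    using E_child[OF assms(1)] EG_sym by blast
  show "w \<in> forced V' E' S" if "E (T (p @ [b])) w" "w \<noteq> T p" for w
    using that assms(2) nbr_outside_subtree[of "p @ [b]" w] by auto
qed simp

lemma sibling_forced:
  assumes "length (p @ [b]) < D" "T p \<in> forced V' E' S" "T (p @ [b, True]) \<in> forced V' E' S"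
    and "T (p @ [b]) \<in> forced V' E' S"
  shows "T (p @ [b, False]) \<in> forced V' E' S"
proof (rule force_off_root[OF assms(4)])
  show "E (T (p @ [b])) (T (p @ [b, False]))"
    using E_child[OF assms(1)] by simp
  show "w \<in> forced V' E' S" if "E (T (p @ [b])) w" "w \<noteq> T (p @ [b, False])" for w
    using that assms(1-3) by (auto simp: EG_T_iff)
qed simp

lemma subtree_forced:
  "length p + 2*k = D \<Longrightarrow> zf_seed k p \<subseteq> S \<Longrightarrow> T p \<in> forced V' E' S \<Longrightarrow> subtree p \<subseteq> forced V' E' S"
proof (induction k arbitrary: p)
  case 0
  then show ?case using leaf_forced by simp
next
  case (Suc k)
  have len: "length p < D" "length (p @ [b]) < D" "length (p @ [b, j]) + 2*k = D" for b j
    using Suc.prems(1) by auto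
  have seeds:
    "insert (T (p @ [b, True])) (zf_seed k (p @ [b, False]) \<union> zf_seed k (p @ [b, True])) \<subseteq> S" for b
    using Suc.prems(2) by (simp only: zf_seed.simps UN_subset_iff) blast
  have seed: "zf_seed k (p @ [b, j]) \<subseteq> S" for b j
    using seeds[of b] by (cases j) simp_all
  have seed_root: "T (p @ [b, True]) \<in> S" for b
    using seeds[of b] by simp
  have "subtree (p @ [b]) \<subseteq> forced V' E' S" for b
  proof -
    have right: "subtree (p @ [b, True]) \<subseteq> forced V' E' S"
      using Suc.IH[OF len(3) seed] forced.init[OF seed_root] by simp
    have mid: "T (p @ [b]) \<in> forced V' E' S"
      using parent_forced[OF len(2)[of b], of True] right by simp
    have "T (p @ [b, False]) \<in> forced V' E' S"
      using sibling_forced[OF len(2)[of b] Suc.prems(3) forced.init[OF seed_root] mid] by simp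
    then have left: "subtree (p @ [b, False]) \<subseteq> forced V' E' S"
      using Suc.IH[OF len(3) seed] by simp
    show ?thesis
      unfolding subtree_split[OF len(2)[of b]] using left mid right by simp
  qed
  then show ?case
    unfolding subtree_split[OF len(1)] using Suc.prems(3) by simp
qed

end

section \<open>The zero forcing numbers\<close>

context tree_graph
begin

lemma root_len: "length [] + 2*(N - 1) = D" and t_root: "t (Suc (N - 1)) = t N"
  using N_pos by auto

lemma card_zero_forcing_set_ge:
  assumes "zero_forcing_set V E S"
  shows "t N + 1 \<le> card S"
proof (rule ccontr)
  assume "\<not> t N + 1 \<le> card S"
  moreover have "S \<inter> subtree [] = S"
    using assms by (auto simp: zero_forcing_set_def subtree_Nil)
  ultimately obtain F where "closed_fort [] S F \<or> rooted_fort [] S F"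
    using fort_if_card_le[OF root_len, of S] t_root by auto
  then have "fort V E F" "F \<inter> S = {}"
    by (auto simp: fort_def closed_fort_def rooted_fort_def subtree_Nil)
  then show False using fort_meets_zero_forcing_set[OF assms] by blast
qed

lemma fort_hat_of_closed_fort:
  assumes "closed_fort [] S F"
  shows "fort (VGh N) (EGh N) F"
  unfolding fort_def
proof (intro conjI ballI)
  show "F \<subseteq> VGh N" "F \<noteq> {}"
    using assms by (auto simp: closed_fort_def subtree_Nil VGh_def)
  fix v assume v: "v \<in> VGh N - F"
  show "\<not> unique_nbr_in (EGh N) F v"
  proof (cases "v = Y")
    case True
    then show ?thesis using assms by (auto simp: unique_nbr_in_def EGh_Y_iff closed_fort_def)
  next
    case False
    have "Y \<notin> F" using assms by (auto simp: closed_fort_def subtree_Nil)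
    have "unique_nbr_in (EGh N) F v = unique_nbr_in E F v"
    proof (rule unique_nbr_in_cong)
      show "x \<in> F \<and> EGh N v x \<longleftrightarrow> x \<in> F \<and> E v x" for x
        using EGh_eq_EG[OF False, of x N] \<open>Y \<notin> F\<close> by auto
    qed
    then show ?thesis
      using assms v False by (auto simp: closed_fort_def subtree_Nil VGh_def)
  qed
qed

lemma fort_hat_of_rooted_fort:
  assumes "rooted_fort [] S F"
  shows "fort (VGh N) (EGh N) (insert Y F)"
  unfolding fort_def
proof (intro conjI ballI)
  show "insert Y F \<subseteq> VGh N" "insert Y F \<noteq> {}"
    using assms by (auto simp: rooted_fort_def subtree_Nil VGh_def)
  fix v assume v: "v \<in> VGh N - insert Y F"
  then have "v \<in> V - F" "v \<noteq> Y" "v \<noteq> T []"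
    using assms by (auto simp: rooted_fort_def VGh_def)
  then have "unique_nbr_in (EGh N) (insert Y F) v = unique_nbr_in E F v"
    using EGh_eq_EG_off_root[of v N] by (intro unique_nbr_in_cong) auto
  then show "\<not> unique_nbr_in (EGh N) (insert Y F) v"
    using assms \<open>v \<in> V - F\<close> by (auto simp: rooted_fort_def subtree_Nil)
qed

lemma card_zero_forcing_set_hat_ge:
  assumes "zero_forcing_set (VGh N) (EGh N) S"
  shows "t N + 1 \<le> card S"
proof (rule ccontr)
  assume "\<not> t N + 1 \<le> card S"
  then have small: "card S \<le> t N" by simp
  have fin: "finite S"
    using assms finite_VG by (auto simp: zero_forcing_set_def VGh_def intro: finite_subset)
  have "S \<inter> subtree [] \<subseteq> S - {Y}"
    by (auto simp: subtree_Nil)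
  then have card_V: "card (S \<inter> subtree []) \<le> card (S - {Y})"
    using fin by (intro card_mono) auto
  show False
  proof (cases "Y \<in> S")
    case True
    then have "0 < card S" using fin card_gt_0_iff by blast
    then have "card (S \<inter> subtree []) < t N"
      using card_V small fin \<open>Y \<in> S\<close> by (simp add: card_Diff_singleton)
    then obtain F where "closed_fort [] S F"
      using fort_if_card_le[OF root_len, of S] t_root by auto
    then show False
      using fort_meets_zero_forcing_set[OF assms fort_hat_of_closed_fort] by (auto simp: closed_fort_def)
  next
    case False
    then have "card (S \<inter> subtree []) \<le> t N"
      using card_V small by simp
    then obtain F where "closed_fort [] S F \<or> rooted_fort [] S F"
      using fort_if_card_le[OF root_len, of S] t_root by auto
    then show False
    proof
      assume "closed_fort [] S F"
      then show False
        using fort_meets_zero_forcing_set[OF assms fort_hat_of_closed_fort] by (auto simp: closed_fort_def)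
    next
      assume "rooted_fort [] S F"
      then show False
        using fort_meets_zero_forcing_set[OF assms fort_hat_of_rooted_fort] \<open>Y \<notin> S\<close>
        by (auto simp: rooted_fort_def)
    qed
  qed
qed

definition seed :: "vtx set" where
  "seed = zf_seed (N - 1) []"

lemma seed_subset: "seed \<subseteq> V - {T []}"
  using zf_seed_subset[OF root_len] by (simp add: seed_def subtree_Nil)

lemma card_insert_seed: "card (insert (T []) seed) = t N + 1" "card (insert Y seed) = t N + 1"
proof -
  have "finite seed" "T [] \<notin> seed" "Y \<notin> seed"
    using seed_subset finite_VG[of N] by (auto intro: finite_subset)
  then show "card (insert (T []) seed) = t N + 1" "card (insert Y seed) = t N + 1"
    using card_zf_seed[OF root_len] t_root by (simp_all add: seed_def)
qed

lemma zero_forcing_set_seed: "zero_forcing_set V E (insert (T []) seed)"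
proof -
  interpret tree_supergraph N V E by unfold_locales auto
  have "subtree [] \<subseteq> forced V E (insert (T []) seed)"
    using subtree_forced[OF root_len] by (auto simp: seed_def intro: forced.init)
  then show ?thesis using seed_subset N_pos by (auto simp: zero_forcing_set_def subtree_Nil)
qed

lemma zero_forcing_set_hat_seed: "zero_forcing_set (VGh N) (EGh N) (insert Y seed)"
proof -
  have "EGh N v w \<longleftrightarrow> E v w" if "v \<in> V" "v \<noteq> T []" for v w
  proof -
    have "v \<noteq> Y" using that(1) by auto
    then show ?thesis using that(2) EGh_eq_EG_off_root by blast
  qed
  then interpret tree_supergraph N "VGh N" "EGh N"
    by unfold_locales (auto simp: VGh_def)
  let ?S = "insert Y seed"
  have Y: "Y \<in> forced (VGh N) (EGh N) ?S" by (rule forced.init) simp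
  have "T [] \<in> forced (VGh N) (EGh N) ?S"
    by (rule forced.force[OF Y]) (use N_pos in \<open>auto simp: VGh_def EGh_Y_iff\<close>)
  then have "subtree [] \<subseteq> forced (VGh N) (EGh N) ?S"
    using subtree_forced[OF root_len] by (auto simp: seed_def intro: forced.init)
  then show ?thesis using seed_subset Y by (auto simp: zero_forcing_set_def subtree_Nil VGh_def)
qed

end

theorem proposition1:
  fixes n :: nat
  assumes "n \<ge> 1"
  shows "Z (VG n) (EG n) = t n + 1 \<and> Z (VGh n) (EGh n) = t n + 1"
proof -
  interpret tree_graph n using assms by unfold_locales
  have "Z (VG n) (EG n) = t n + 1"
    using zero_forcing_set_seed card_insert_seed(1) card_zero_forcing_set_ge by (rule Z_eqI)
  moreover have "Z (VGh n) (EGh n) = t n + 1"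
    using zero_forcing_set_hat_seed card_insert_seed(2) card_zero_forcing_set_hat_ge by (rule Z_eqI)
  ultimately show ?thesis ..
qed

end
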